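(* Let $\mathcal{F}$ be a family of pairwise intersecting compact convex sets in the plane. Then for any distinct $A,B,C,D\in\mathcal{F}$, if $o(ABD)=o(BCD)=o(CAD)=1$ then $o(ABC)=1$.
   Context: For three pairwise intersecting compact convex sets $A,B,C$ in the plane: $o(ABC)=0$ if $A\cap B\cap C\neq\emptyset$; otherwise $o(ABC)=o(xyz)$ for any $x\in B\cap C$, $y\in A\cap C$, $z\in A\cap B$, where for points $o(xyz)=+1$ if $x,y,z$ form a counterclockwise triangle and $-1$ if clockwise (this is known to be independent of the choice of $x,y,z$, and the points are never collinear in this case). *)

theory Defs
  imports "HOL-Analysis.Analysis"
begin

definition orient :: "real \<times> real \<Rightarrow> real \<times> real \<Rightarrow> real \<times> real \<Rightarrow> int" where
  "orient x y z =
     (let d = (fst y - fst x) * (snd z - snd x) - (snd y - snd x) * (fst z - fst x)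
      in if d > 0 then 1 else if d < 0 then -1 else 0)"

definition orient_sets :: "(real \<times> real) set \<Rightarrow> (real \<times> real) set \<Rightarrow> (real \<times> real) set \<Rightarrow> int" where
  "orient_sets A B C =
     (if A \<inter> B \<inter> C \<noteq> {} then 0
      else orient (SOME x. x \<in> B \<inter> C) (SOME y. y \<in> A \<inter> C) (SOME z. z \<in> A \<inter> B))"

end

theory Submission
  imports Defs
begin

(* Two convex sets that meet a line L but have no common point on L are ordered along L.
  If moreover their intersection contains a point z strictly on one side of L, this order
  alone decides the orientation of every triangle formed by z and a point of each set on the
  other side of L. Separating R from P \<inter> Q by a line therefore shows that o(PQR) is well
  defined.

  For the lemma, o(ABD) = o(BCD) = o(CAD) = 1 puts every point of A \<inter> B \<inter> C inside a
  triangle with vertices in D, contradicting A \<inter> B \<inter> D = {}. Separate D from A \<inter> B by a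
  line L; then o(ABD) = 1 says that A precedes B along L. If B \<inter> C and C \<inter> A both reach the
  side of D, the order of A and B gives o(ABC) = 1 directly. If only one of them does,
  o(BCD) = 1 or o(CAD) = 1 orders C against A and B, and the same argument with the two sides
  of L exchanged applies. If neither does, the three hypotheses would order A, B, C
  cyclically along L. *)

definition det3 :: "real \<times> real \<Rightarrow> real \<times> real \<Rightarrow> real \<times> real \<Rightarrow> real" where
  "det3 x y z = (fst y - fst x) * (snd z - snd x) - (snd y - snd x) * (fst z - fst x)"

lemma orient_det3: "orient x y z = (if det3 x y z > 0 then 1 else if det3 x y z < 0 then -1 else 0)"
  by (simp add: orient_def det3_def Let_def)

lemma det3_rotate: "det3 x y z = det3 y z x"
  by (simp add: det3_def algebra_simps)

lemma det3_swap: "det3 y x z = - det3 x y z"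
  by (simp add: det3_def algebra_simps)

lemma det3_shrink_to_vertex:
  "det3 (z + s *\<^sub>R (q - z)) (z + t *\<^sub>R (p - z)) z = s * t * det3 q p z"
  by (simp add: det3_def algebra_simps)

lemma in_convex_hull_if_det3_pos:
  assumes "det3 b a q > 0" "det3 c b q > 0" "det3 a c q > 0"
  shows "q \<in> convex hull {a, b, c}"
proof -
  define u v w where "u = det3 c b q" and "v = det3 a c q" and "w = det3 b a q"
  define s where "s = u + v + w"
  have "s > 0" using assms by (simp add: s_def u_def v_def w_def)
  have "q = (1 / s) *\<^sub>R (s *\<^sub>R q)"
    using \<open>s > 0\<close> by simp
  also have "s *\<^sub>R q = u *\<^sub>R a + v *\<^sub>R b + w *\<^sub>R c"
    unfolding s_def u_def v_def w_def det3_def by (simp add: prod_eq_iff algebra_simps)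
  finally have "q = (u / s) *\<^sub>R a + (v / s) *\<^sub>R b + (w / s) *\<^sub>R c"
    by (simp add: scaleR_add_right)
  moreover have "u / s + v / s + w / s = 1"
    using \<open>s > 0\<close> by (simp add: s_def flip: add_divide_distrib)
  ultimately show ?thesis
    unfolding convex_hull_3 using assms \<open>s > 0\<close>
    by (intro CollectI exI[of _ "u / s"] exI[of _ "v / s"] exI[of _ "w / s"]) (simp add: u_def v_def w_def)
qed

(* The line with normal n is {p. inner n p = k}; inner (perp n) is a coordinate along it. *)
definition perp :: "real \<times> real \<Rightarrow> real \<times> real" where
  "perp n = (- snd n, fst n)"

lemma inner_self_scaleR_decompose: "inner n n *\<^sub>R v = inner n v *\<^sub>R n + inner (perp n) v *\<^sub>R perp n"
  by (cases n; cases v) (simp add: perp_def algebra_simps)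

lemma line_point_eqI:
  assumes "n \<noteq> 0" "inner n p = k" "inner n q = k" "inner (perp n) p = inner (perp n) q"
  shows "p = q"
proof -
  have "inner n n *\<^sub>R p = inner n n *\<^sub>R q"
    using assms(2-4) by (simp add: inner_self_scaleR_decompose[of n])
  then show ?thesis using assms(1) by simp
qed

lemma det3_line_points:
  assumes "inner n p = k" "inner n q = k"
  shows "inner n n * det3 q p w = (inner (perp n) q - inner (perp n) p) * (inner n w - k)"
proof -
  have "inner n n * det3 q p w = (inner n p - inner n q) * det3 q (q + n) w
      + (inner (perp n) q - inner (perp n) p) * (inner n w - inner n q)"
    unfolding det3_def perp_def inner_prod_def by (simp add: algebra_simps)
  then show ?thesis using assms by simp
qed

lemma segment_crosses_line:
  assumes "convex P" "z \<in> P" "p \<in> P" "inner n z > k" "inner n p \<le> k"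
  obtains t where "0 < t" "z + t *\<^sub>R (p - z) \<in> P" "inner n (z + t *\<^sub>R (p - z)) = k"
proof
  define t where "t = (inner n z - k) / (inner n z - inner n p)"
  show "0 < t" using assms(4,5) by (simp add: t_def)
  have "t \<le> 1" using assms(4,5) by (simp add: t_def)
  have "z + t *\<^sub>R (p - z) = (1 - t) *\<^sub>R z + t *\<^sub>R p" by (simp add: algebra_simps)
  then show "z + t *\<^sub>R (p - z) \<in> P"
    using convexD[OF assms(1-3)] \<open>0 < t\<close> \<open>t \<le> 1\<close> by simp
  have "inner n (z + t *\<^sub>R (p - z)) = inner n z + t * (inner n p - inner n z)"
    by (simp add: inner_add_right inner_diff_right)
  also have "\<dots> = k"
    using assms(4,5) by (simp add: t_def field_simps)
  finally show "inner n (z + t *\<^sub>R (p - z)) = k" .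
qed

definition precedes :: "real \<times> real \<Rightarrow> real \<Rightarrow> (real \<times> real) set \<Rightarrow> (real \<times> real) set \<Rightarrow> bool" where
  "precedes n k P Q \<longleftrightarrow> (\<forall>p\<in>P. \<forall>q\<in>Q. inner n p = k \<longrightarrow> inner n q = k \<longrightarrow> inner (perp n) p < inner (perp n) q)"

lemma perp_uminus: "perp (- n) = - perp n"
  by (simp add: perp_def)

lemma precedes_flip: "precedes (- n) (- k) P Q \<longleftrightarrow> precedes n k Q P"
  unfolding precedes_def perp_uminus by auto

lemma precedes_trans:
  assumes "precedes n k P Q" "precedes n k Q R" "q \<in> Q" "inner n q = k"
  shows "precedes n k P R"
  unfolding precedes_def
proof (intro ballI impI)
  fix p r assume "p \<in> P" "r \<in> R" "inner n p = k" "inner n r = k"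
  then have "inner (perp n) p < inner (perp n) q" "inner (perp n) q < inner (perp n) r"
    using assms unfolding precedes_def by blast+
  then show "inner (perp n) p < inner (perp n) r" by simp
qed

lemma precedes_no_common_point:
  assumes "precedes n k P Q" "r \<in> P" "r \<in> Q"
  shows "inner n r \<noteq> k"
  using assms unfolding precedes_def by blast

lemma precedes_if_one_pair:
  assumes "n \<noteq> 0" "convex P" "convex Q" "\<forall>r\<in>P \<inter> Q. inner n r \<noteq> k"
    "p \<in> P" "inner n p = k" "q \<in> Q" "inner n q = k" "inner (perp n) p < inner (perp n) q"
  shows "precedes n k P Q"
  unfolding precedes_def
proof (intro ballI impI)
  fix p' q' assume "p' \<in> P" "q' \<in> Q" "inner n p' = k" "inner n q' = k"
  show "inner (perp n) p' < inner (perp n) q'"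
  proof (rule ccontr)
    assume "\<not> ?thesis"
    then have flipped: "inner (perp n) q' \<le> inner (perp n) p'" by simp
    define f where "f r = inner (perp n) r" for r
    define l where "l = (f q - f p) / ((f q - f p) - (f q' - f p'))"
    have "0 \<le> l" "l \<le> 1"
      using flipped assms(9) by (auto simp: l_def f_def divide_le_eq_1)
    (* Moving p to p' and q to q' simultaneously, the two points swap order, so they meet at l. *)
    define p'' where "p'' = (1 - l) *\<^sub>R p + l *\<^sub>R p'"
    define q'' where "q'' = (1 - l) *\<^sub>R q + l *\<^sub>R q'"
    have "p'' \<in> P" "q'' \<in> Q"
      using convexD[OF assms(2,5) \<open>p' \<in> P\<close>] convexD[OF assms(3,7) \<open>q' \<in> Q\<close>] \<open>0 \<le> l\<close> \<open>l \<le> 1\<close>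
      by (simp_all add: p''_def q''_def)
    have on_line: "inner n p'' = k" "inner n q'' = k"
      using assms(6,8) \<open>inner n p' = k\<close> \<open>inner n q' = k\<close>
      by (simp_all add: p''_def q''_def inner_add_right algebra_simps)
    have "f q'' - f p'' = (f q - f p) + l * ((f q' - f p') - (f q - f p))"
      by (simp add: p''_def q''_def f_def inner_add_right algebra_simps)
    also have "\<dots> = 0"
      using flipped assms(9) by (simp add: l_def f_def field_simps)
    finally have "p'' = q''"
      using line_point_eqI[OF assms(1) on_line] by (simp add: f_def)
    then show False using assms(4) \<open>p'' \<in> P\<close> \<open>q'' \<in> Q\<close> on_line by auto
  qed
qed

lemma precedes_cases:
  assumes "n \<noteq> 0" "convex P" "convex Q" "\<forall>r\<in>P \<inter> Q. inner n r \<noteq> k"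
    "p \<in> P" "inner n p = k" "q \<in> Q" "inner n q = k"
  shows "precedes n k P Q \<or> precedes n k Q P"
proof -
  have "inner (perp n) p \<noteq> inner (perp n) q"
    using line_point_eqI[OF assms(1,6,8)] assms(4,5,7,8) by auto
  then show ?thesis
    using precedes_if_one_pair[OF assms] precedes_if_one_pair[OF assms(1,3,2) _ assms(7,8,5,6)] assms(4)
    by (metis Int_commute linorder_neqE_linordered_idom)
qed

lemma det3_pos_above:
  assumes "n \<noteq> 0" "convex P" "convex Q" "precedes n k P Q"
    "z \<in> P" "z \<in> Q" "inner n z \<ge> k" "p \<in> P" "inner n p \<le> k" "q \<in> Q" "inner n q \<le> k"
  shows "det3 q p z > 0"
proof -
  have "inner n z > k" using precedes_no_common_point[OF assms(4-6)] assms(7) by simp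
  obtain s where s: "0 < s" "z + s *\<^sub>R (q - z) \<in> Q" "inner n (z + s *\<^sub>R (q - z)) = k"
    using segment_crosses_line[OF assms(3,6,10) \<open>inner n z > k\<close> assms(11)] .
  obtain t where t: "0 < t" "z + t *\<^sub>R (p - z) \<in> P" "inner n (z + t *\<^sub>R (p - z)) = k"
    using segment_crosses_line[OF assms(2,5,8) \<open>inner n z > k\<close> assms(9)] .
  have "inner (perp n) (z + t *\<^sub>R (p - z)) < inner (perp n) (z + s *\<^sub>R (q - z))"
    using assms(4) s t unfolding precedes_def by blast
  then have "inner n n * det3 (z + s *\<^sub>R (q - z)) (z + t *\<^sub>R (p - z)) z > 0"
    using det3_line_points[OF t(3) s(3)] \<open>inner n z > k\<close> by simp
  moreover have "inner n n > 0" using assms(1) by simp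
  ultimately have "(s * t) * det3 q p z > 0"
    by (simp add: det3_shrink_to_vertex zero_less_mult_iff)
  then show ?thesis using zero_less_mult_pos mult_pos_pos[OF s(1) t(1)] by blast
qed

lemma det3_pos_below:
  assumes "n \<noteq> 0" "convex P" "convex Q" "precedes n k P Q"
    "z \<in> P" "z \<in> Q" "inner n z \<le> k" "p \<in> P" "inner n p \<ge> k" "q \<in> Q" "inner n q \<ge> k"
  shows "det3 p q z > 0"
  using det3_pos_above[of "- n" Q P "- k" z q p] assms by (simp add: precedes_flip)

lemma det3_pos_iff_precedes:
  assumes "n \<noteq> 0" "convex P" "convex Q" "\<forall>r\<in>P \<inter> Q. inner n r \<noteq> k"
    "z \<in> P \<inter> Q" "inner n z > k" "p \<in> P" "inner n p \<le> k" "q \<in> Q" "inner n q \<le> k"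
  shows "det3 q p z > 0 \<longleftrightarrow> precedes n k P Q"
proof -
  obtain t where "z + t *\<^sub>R (p - z) \<in> P" "inner n (z + t *\<^sub>R (p - z)) = k"
    using segment_crosses_line[OF assms(2) _ assms(7,6,8)] assms(5) by blast
  moreover obtain s where "z + s *\<^sub>R (q - z) \<in> Q" "inner n (z + s *\<^sub>R (q - z)) = k"
    using segment_crosses_line[OF assms(3) _ assms(9,6,10)] assms(5) by blast
  ultimately have "precedes n k P Q \<or> precedes n k Q P"
    using precedes_cases[OF assms(1-4)] by blast
  moreover have "det3 q p z > 0" if "precedes n k P Q"
    using det3_pos_above[OF assms(1-3) that] assms(5-10) by auto
  moreover have "det3 p q z > 0" if "precedes n k Q P"
    using det3_pos_above[OF assms(1,3,2) that] assms(5-10) by auto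
  ultimately show ?thesis using det3_swap[of p q z] by auto
qed

lemma separating_line:
  fixes S T :: "(real \<times> real) set"
  assumes "convex S" "closed S" "convex T" "compact T" "s \<in> S" "t \<in> T" "S \<inter> T = {}"
  obtains n k where "n \<noteq> 0" "\<forall>x\<in>S. inner n x < k" "\<forall>x\<in>T. inner n x > k"
proof -
  obtain n k where "\<forall>x\<in>S. inner n x < k" "\<forall>x\<in>T. inner n x > k"
    using separating_hyperplane_closed_compact[OF assms(1-4) _ assms(7)] assms(6) by blast
  moreover then have "n \<noteq> 0" using assms(5,6) by fastforce
  ultimately show ?thesis using that by blast
qed

lemma orient_witness_independent:
  assumes "compact P" "convex P" "compact Q" "convex Q" "compact R" "convex R" "P \<inter> Q \<inter> R = {}"
    "x \<in> Q \<inter> R" "y \<in> P \<inter> R" "z \<in> P \<inter> Q" "x' \<in> Q \<inter> R" "y' \<in> P \<inter> R" "z' \<in> P \<inter> Q"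
  shows "orient x y z = orient x' y' z'"
proof -
  have "closed R" "convex (P \<inter> Q)" "compact (P \<inter> Q)" "R \<inter> (P \<inter> Q) = {}"
    using assms(1-7) by (auto intro: compact_imp_closed compact_Int convex_Int)
  then obtain n k where n: "n \<noteq> 0" and R: "\<forall>r\<in>R. inner n r < k" and PQ: "\<forall>r\<in>P \<inter> Q. inner n r > k"
    using separating_line[OF assms(6) \<open>closed R\<close> _ _ _ assms(10)] assms(8) by blast
  have PQ': "\<forall>r\<in>P \<inter> Q. inner n r \<noteq> k" using PQ by force
  have "det3 x y z > 0 \<longleftrightarrow> precedes n k P Q" "det3 x' y' z' > 0 \<longleftrightarrow> precedes n k P Q"
    using det3_pos_iff_precedes[OF n assms(2,4) PQ'] assms(8-13) PQ R by (simp_all add: less_imp_le)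
  moreover have "det3 y x z > 0 \<longleftrightarrow> precedes n k Q P" "det3 y' x' z' > 0 \<longleftrightarrow> precedes n k Q P"
    using det3_pos_iff_precedes[OF n assms(4,2)] PQ' assms(8-13) PQ R by (simp_all add: less_imp_le Int_commute)
  ultimately show ?thesis by (simp add: orient_det3 det3_swap[of y x] det3_swap[of y' x'])
qed

lemma orient_sets_eq_orient:
  assumes "compact P" "convex P" "compact Q" "convex Q" "compact R" "convex R" "P \<inter> Q \<inter> R = {}"
    "x \<in> Q \<inter> R" "y \<in> P \<inter> R" "z \<in> P \<inter> Q"
  shows "orient_sets P Q R = orient x y z"
proof -
  have "(SOME x. x \<in> Q \<inter> R) \<in> Q \<inter> R" "(SOME y. y \<in> P \<inter> R) \<in> P \<inter> R" "(SOME z. z \<in> P \<inter> Q) \<in> P \<inter> Q"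
    using assms(8-10) by (meson someI)+
  then show ?thesis
    unfolding orient_sets_def using assms(7) orient_witness_independent[OF assms(1-7) _ _ _ assms(8-10)] by simp
qed

lemma orient_sets_eq_1D:
  assumes "compact P" "convex P" "compact Q" "convex Q" "compact R" "convex R" "orient_sets P Q R = 1"
  shows "P \<inter> Q \<inter> R = {}"
    and "x \<in> Q \<inter> R \<Longrightarrow> y \<in> P \<inter> R \<Longrightarrow> z \<in> P \<inter> Q \<Longrightarrow> det3 x y z > 0"
proof -
  show disjoint: "P \<inter> Q \<inter> R = {}" using assms(7) by (auto simp: orient_sets_def split: if_splits)
  assume "x \<in> Q \<inter> R" "y \<in> P \<inter> R" "z \<in> P \<inter> Q"
  then have "orient x y z = 1" using orient_sets_eq_orient[OF assms(1-6) disjoint] assms(7) by simp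
  then show "det3 x y z > 0" by (simp add: orient_det3 split: if_splits)
qed

lemma precedes_if_det3_pos:
  assumes "n \<noteq> 0" "convex P" "convex Q" "p \<in> P" "inner n p \<le> k" "q \<in> Q" "inner n q \<le> k"
    and "P \<inter> Q \<noteq> {}" "\<forall>r\<in>P \<inter> Q. inner n r > k" "\<forall>r\<in>P \<inter> Q. det3 q p r > 0"
  shows "precedes n k P Q"
proof -
  obtain z where "z \<in> P \<inter> Q" using assms(8) by blast
  moreover have "\<forall>r\<in>P \<inter> Q. inner n r \<noteq> k" using assms(9) by force
  ultimately show ?thesis
    using det3_pos_iff_precedes[OF assms(1-3) _ _ _ assms(4-7)] assms(9,10) by blast
qed

lemma det3_pos_witnesses:
  assumes "n \<noteq> 0" "convex A" "convex B" "convex C"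
    and "a \<in> A" "inner n a \<le> k" "b \<in> B" "inner n b \<le> k" "c \<in> C" "inner n c \<le> k"
    and "A \<inter> B \<noteq> {}" "B \<inter> C \<noteq> {}" "C \<inter> A \<noteq> {}" "\<forall>z\<in>A \<inter> B. inner n z > k"
    and "\<forall>z\<in>A \<inter> B. det3 b a z > 0" "\<forall>x\<in>B \<inter> C. det3 c b x > 0" "\<forall>y\<in>C \<inter> A. det3 a c y > 0"
  shows "\<exists>x\<in>B \<inter> C. \<exists>y\<in>C \<inter> A. \<exists>z\<in>A \<inter> B. det3 x y z > 0"
proof -
  obtain x0 y0 z0 where x0: "x0 \<in> B \<inter> C" and y0: "y0 \<in> C \<inter> A" and z0: "z0 \<in> A \<inter> B"
    using assms(11-13) by blast
  have "inner n z0 > k" using assms(14) z0 by blast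
  obtain a' where a': "a' \<in> A" "inner n a' = k"
    using segment_crosses_line[OF assms(2) _ assms(5) \<open>inner n z0 > k\<close> assms(6)] z0 by blast
  obtain b' where b': "b' \<in> B" "inner n b' = k"
    using segment_crosses_line[OF assms(3) _ assms(7) \<open>inner n z0 > k\<close> assms(8)] z0 by blast
  have A_B: "precedes n k A B"
    using precedes_if_det3_pos[OF assms(1-3,5-8,11,14,15)] .
  have B_C: "precedes n k B C" if "\<forall>x\<in>B \<inter> C. inner n x > k"
    using precedes_if_det3_pos[OF assms(1,3,4,7-10,12) that assms(16)] .
  have C_A: "precedes n k C A" if "\<forall>y\<in>C \<inter> A. inner n y > k"
    using precedes_if_det3_pos[OF assms(1,4,2,9,10,5,6,13) that assms(17)] .
  consider (both_low) x y where "x \<in> B \<inter> C" "inner n x \<le> k" "y \<in> C \<inter> A" "inner n y \<le> k"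
    | (x_low) x where "x \<in> B \<inter> C" "inner n x \<le> k" "\<forall>y\<in>C \<inter> A. inner n y > k"
    | (y_low) y where "y \<in> C \<inter> A" "inner n y \<le> k" "\<forall>x\<in>B \<inter> C. inner n x > k"
    | (both_high) "\<forall>x\<in>B \<inter> C. inner n x > k" "\<forall>y\<in>C \<inter> A. inner n y > k"
    by (meson not_le)
  then show ?thesis
  proof cases
    case (both_low x y)
    then have "det3 x y z0 > 0"
      using det3_pos_above[OF assms(1-3) A_B] z0 \<open>inner n z0 > k\<close> by simp
    then show ?thesis using both_low z0 by blast
  next
    case (x_low x)
    have "precedes n k C B" using precedes_trans[OF C_A[OF x_low(3)] A_B a'] .
    then have "det3 y0 z0 x > 0"
      using det3_pos_below[OF assms(1,4,3)] x_low y0 z0 \<open>inner n z0 > k\<close> by (simp add: less_imp_le)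
    then have "det3 x y0 z0 > 0" using det3_rotate[of x y0 z0] by simp
    then show ?thesis using x_low(1) y0 z0 by blast
  next
    case (y_low y)
    have "precedes n k A C" using precedes_trans[OF A_B B_C[OF y_low(3)] b'] .
    then have "det3 z0 x0 y > 0"
      using det3_pos_below[OF assms(1,2,4)] y_low x0 z0 \<open>inner n z0 > k\<close> by (simp add: less_imp_le)
    then have "det3 x0 y z0 > 0" using det3_rotate[of x0 y z0] det3_rotate[of y z0 x0] by simp
    then show ?thesis using y_low(1) x0 z0 by blast
  next
    case both_high
    obtain c' where c': "c' \<in> C" "inner n c' = k"
      using segment_crosses_line[OF assms(4) _ assms(9) _ assms(10)] x0 both_high(1) by blast
    have "precedes n k A C" using precedes_trans[OF A_B B_C[OF both_high(1)] b'] .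
    then have "precedes n k A A" using precedes_trans[OF _ C_A[OF both_high(2)] c'] by blast
    then show ?thesis using precedes_no_common_point a' by blast
  qed
qed

lemma orient_sets_eq_1_inter_empty:
  assumes "compact A" "convex A" "compact B" "convex B" "compact C" "convex C" "compact D" "convex D"
    and "orient_sets A B D = 1" "orient_sets B C D = 1" "orient_sets C A D = 1"
    and "A \<inter> D \<noteq> {}" "B \<inter> D \<noteq> {}" "C \<inter> D \<noteq> {}"
  shows "A \<inter> B \<inter> C = {}"
proof (rule equals0I)
  note ABD = orient_sets_eq_1D[OF assms(1-4,7,8,9)]
    and BCD = orient_sets_eq_1D[OF assms(3-6,7,8,10)]
    and CAD = orient_sets_eq_1D[OF assms(5,6,1,2,7,8,11)]
  obtain a b c where abc: "a \<in> A \<inter> D" "b \<in> B \<inter> D" "c \<in> C \<inter> D"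
    using assms(12-14) by blast
  fix q assume q: "q \<in> A \<inter> B \<inter> C"
  then have "q \<in> convex hull {a, b, c}"
    using in_convex_hull_if_det3_pos ABD(2) BCD(2) CAD(2) abc by simp
  also have "convex hull {a, b, c} \<subseteq> D"
    using abc assms(8) by (simp add: hull_minimal)
  finally show False using q ABD(1) by blast
qed

theorem lemma2:
  fixes \<F> :: "(real \<times> real) set set"
  assumes cc: "\<And>S. S \<in> \<F> \<Longrightarrow> compact S \<and> convex S"
    and pw: "\<And>S T. S \<in> \<F> \<Longrightarrow> T \<in> \<F> \<Longrightarrow> S \<inter> T \<noteq> {}"
    and mem: "A \<in> \<F>" "B \<in> \<F>" "C \<in> \<F>" "D \<in> \<F>"
    and dist: "distinct [A, B, C, D]"
    and h: "orient_sets A B D = 1" "orient_sets B C D = 1" "orient_sets C A D = 1"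
  shows "orient_sets A B C = 1"
proof -
  have A: "compact A" "convex A" and B: "compact B" "convex B"
    and C: "compact C" "convex C" and D: "compact D" "convex D"
    using cc mem by auto
  have ne: "A \<inter> B \<noteq> {}" "B \<inter> C \<noteq> {}" "C \<inter> A \<noteq> {}" "A \<inter> D \<noteq> {}" "B \<inter> D \<noteq> {}" "C \<inter> D \<noteq> {}"
    using pw mem by auto
  have ABC: "A \<inter> B \<inter> C = {}" using orient_sets_eq_1_inter_empty[OF A B C D h ne(4-6)] .
  note ABD = orient_sets_eq_1D[OF A B D h(1)]
    and BCD = orient_sets_eq_1D[OF B C D h(2)]
    and CAD = orient_sets_eq_1D[OF C A D h(3)]
  obtain a b c where abc: "a \<in> A \<inter> D" "b \<in> B \<inter> D" "c \<in> C \<inter> D" using ne(4-6) by blast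
  obtain n k where n: "n \<noteq> 0" and D_below: "\<forall>x\<in>D. inner n x < k"
    and AB_above: "\<forall>x\<in>A \<inter> B. inner n x > k"
    using separating_line[OF D(2) compact_imp_closed[OF D(1)] convex_Int[OF A(2) B(2)]
        compact_Int[OF A(1) B(1)]] abc ne(1) ABD(1) by blast
  have "inner n a \<le> k" "inner n b \<le> k" "inner n c \<le> k"
    using abc D_below by (auto intro: less_imp_le)
  moreover have "\<forall>z\<in>A \<inter> B. det3 b a z > 0" "\<forall>x\<in>B \<inter> C. det3 c b x > 0" "\<forall>y\<in>C \<inter> A. det3 a c y > 0"
    using ABD(2) BCD(2) CAD(2) abc by blast+
  ultimately obtain x y z where "x \<in> B \<inter> C" "y \<in> C \<inter> A" "z \<in> A \<inter> B" "det3 x y z > 0"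
    using det3_pos_witnesses[OF n A(2) B(2) C(2)] abc ne AB_above by blast
  then show ?thesis using orient_sets_eq_orient[OF A B C ABC] by (simp add: orient_det3 Int_commute)
qed

end
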